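(* Let $\mathcal{M}=\langle M,\circ,e\rangle$ be an effective mge monoid and let $\mathcal{T}=\langle \Sigma^*\times\mathcal{M},Q,I,F,\Delta\rangle$ be an arbitrary (not necessarily real-time) functional monoidal finite-state transducer with $\langle\varepsilon,e\rangle\in L(\mathcal{T})$. Then there is a bimachine $\mathcal{B}=\langle\mathcal{M},\mathcal{A}_L,\mathcal{A}_R,\psi\rangle$ such that $\mathcal{A}_L$ has at most $2^{|Q|}$ states, $\mathcal{A}_R$ has at most $2^{|Q|}$ states, and $O_{\mathcal{B}}=O_{\mathcal{T}}$ (as partial functions $\Sigma^*\to M$).
   Context: A monoid $\langle M,\circ,e\rangle$ has right cancellation if $ac=bc$ implies $a=b$. A tuple $\langle m_1,\dots,m_n\rangle\in M^n$ is equalizable if there is $\langle x_1,\dots,x_n\rangle\in M^n$ (an equalizer) with $m_1x_1=\dots=m_nx_n$; an instance of an equalizer $\langle x_1,\dots,x_n\rangle$ is any $\langle x_1x,\dots,x_nx\rangle$ with $x\in M$; a most general equalizer (mge) is an equalizer of which every equalizer is an instance. An mge monoid is a monoid with right cancellation in which every equalizable pair has an mge. An element $m$ is invertible if $mn=e$ for some $n$ (denoted $m^{-1}$). An mge monoid is effective if (i) $M$ is represented as a recursive subset of $\mathbb{N}$ with computable operation, (ii) equality is decidable, (iii) it is decidable whether a pair is equalizable and there is a computable function $\eta:M^2\to M^2$ with $\eta(m,m')$ an mge of $\langle m,m'\rangle$ for every equalizable pair, (iv) inverses of invertible elements are computable. A monoidal finite-state transducer is $\mathcal{T}=\langle\Sigma^*\times\mathcal{M},Q,I,F,\Delta\rangle$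 with $\Sigma$ a finite alphabet, $Q$ finite, $I,F\subseteq Q$, and finite $\Delta\subseteq Q\times((\Sigma\cup\{\varepsilon\})\times M)\times Q$. The generalized transition relation $\Delta^*$ is the least set containing $\langle q,\langle\varepsilon,e\rangle,q\rangle$ for all $q$ and closed under: $\langle q_1,\langle u,w\rangle,q_2\rangle\in\Delta^*$ and $\langle q_2,\langle a,m\rangle,q_3\rangle\in\Delta$ imply $\langle q_1,\langle ua,wm\rangle,q_3\rangle\in\Delta^*$. $L(\mathcal{T})=\{\langle u,m\rangle:\exists p\in I,q\in F,\ \langle p,\langle u,m\rangle,q\rangle\in\Delta^*\}$. $\mathcal{T}$ is functional if $L(\mathcal{T})$ is (the graph of) a partial function, denoted $O_{\mathcal{T}}:\Sigma^*\to M$. A bimachine is $\mathcal{B}=\langle\mathcal{M},\mathcal{A}_L,\mathcal{A}_R,\psi\rangle$ where $\mathcal{A}_L=\langle\Sigma,L,s_L,L,\delta_L\rangle$ and $\mathcal{A}_R=\langle\Sigma,R,s_R,R,\delta_R\rangle$ are deterministic finite automata (all states final) and $\psi:L\times\Sigma\times R\to M$ is a partial function. Define $\psi^*(l,\varepsilon,r)=e$ and $\psi^*(l,t\sigma,r)=\psi^*(l,t,\delta_R(r,\sigma))\circ\psi(\delta_L^*(l,t),\sigma,r)$; the function represented by $\mathcal{B}$ is $O_{\mathcal{B}}(t)=\psi^*(s_L,t,s_R)$ (partial). *)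

theory Defs
  imports Main
begin

definition right_cancellation :: "'m::monoid_mult itself \<Rightarrow> bool" where
  "right_cancellation _ \<longleftrightarrow> (\<forall>a b c :: 'm. a * c = b * c \<longrightarrow> a = b)"

definition is_equalizer :: "'m::monoid_mult \<Rightarrow> 'm \<Rightarrow> 'm \<Rightarrow> 'm \<Rightarrow> bool" where
  "is_equalizer m1 m2 x1 x2 \<longleftrightarrow> m1 * x1 = m2 * x2"

definition equalizable :: "'m::monoid_mult \<Rightarrow> 'm \<Rightarrow> bool" where
  "equalizable m1 m2 \<longleftrightarrow> (\<exists>x1 x2. is_equalizer m1 m2 x1 x2)"

definition is_mge :: "'m::monoid_mult \<Rightarrow> 'm \<Rightarrow> 'm \<Rightarrow> 'm \<Rightarrow> bool" where
  "is_mge m1 m2 x1 x2 \<longleftrightarrow> is_equalizer m1 m2 x1 x2 \<and>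
     (\<forall>y1 y2. is_equalizer m1 m2 y1 y2 \<longrightarrow> (\<exists>x. y1 = x1 * x \<and> y2 = x2 * x))"

definition mge_monoid :: "'m::monoid_mult itself \<Rightarrow> bool" where
  "mge_monoid T \<longleftrightarrow> right_cancellation T \<and>
     (\<forall>m m' :: 'm. equalizable m m' \<longrightarrow> (\<exists>x1 x2. is_mge m m' x1 x2))"

section \<open>Monoidal finite-state transducers (alphabet = finite type 'a, None = \<epsilon>)\<close>

definition word_of :: "'a option \<Rightarrow> 'a list" where
  "word_of a = (case a of None \<Rightarrow> [] | Some s \<Rightarrow> [s])"

definition transducer :: "'q set \<Rightarrow> 'q set \<Rightarrow> 'q set \<Rightarrow> ('q \<times> ('a option \<times> 'm) \<times> 'q) set \<Rightarrow> bool" where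
  "transducer Q I F \<Delta> \<longleftrightarrow> finite Q \<and> I \<subseteq> Q \<and> F \<subseteq> Q \<and> finite \<Delta> \<and>
     (\<forall>(p, l, q) \<in> \<Delta>. p \<in> Q \<and> q \<in> Q)"

inductive_set gen_trans :: "('q \<times> ('a option \<times> 'm::monoid_mult) \<times> 'q) set \<Rightarrow> ('q \<times> ('a list \<times> 'm) \<times> 'q) set"
  for \<Delta> where
  refl: "(q, ([], 1), q) \<in> gen_trans \<Delta>"
| step: "(q1, (u, w), q2) \<in> gen_trans \<Delta> \<Longrightarrow> (q2, (a, m), q3) \<in> \<Delta> \<Longrightarrow>
         (q1, (u @ word_of a, w * m), q3) \<in> gen_trans \<Delta>"

definition trans_lang :: "'q set \<Rightarrow> 'q set \<Rightarrow> ('q \<times> ('a option \<times> 'm::monoid_mult) \<times> 'q) set \<Rightarrow> ('a list \<times> 'm) set" where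
  "trans_lang I F \<Delta> = {(u, m). \<exists>p\<in>I. \<exists>q\<in>F. (p, (u, m), q) \<in> gen_trans \<Delta>}"

definition functional :: "'q set \<Rightarrow> 'q set \<Rightarrow> ('q \<times> ('a option \<times> 'm::monoid_mult) \<times> 'q) set \<Rightarrow> bool" where
  "functional I F \<Delta> \<longleftrightarrow> (\<forall>u m m'. (u, m) \<in> trans_lang I F \<Delta> \<longrightarrow> (u, m') \<in> trans_lang I F \<Delta> \<longrightarrow> m = m')"

definition trans_output :: "'q set \<Rightarrow> 'q set \<Rightarrow> ('q \<times> ('a option \<times> 'm::monoid_mult) \<times> 'q) set \<Rightarrow> 'a list \<Rightarrow> 'm option" where
  "trans_output I F \<Delta> u = (if \<exists>m. (u, m) \<in> trans_lang I F \<Delta>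
      then Some (THE m. (u, m) \<in> trans_lang I F \<Delta>) else None)"

definition dfa :: "nat set \<Rightarrow> nat \<Rightarrow> (nat \<Rightarrow> 'a \<Rightarrow> nat) \<Rightarrow> bool" where
  "dfa S s \<delta> \<longleftrightarrow> finite S \<and> s \<in> S \<and> (\<forall>x\<in>S. \<forall>\<sigma>. \<delta> x \<sigma> \<in> S)"

definition dfa_star :: "(nat \<Rightarrow> 'a \<Rightarrow> nat) \<Rightarrow> nat \<Rightarrow> 'a list \<Rightarrow> nat" where
  "dfa_star \<delta> l t = foldl \<delta> l t"

text \<open>psi_rev takes the input word reversed, so that the recursion on t @ [\<sigma>] becomes
  structural recursion.\<close>
primrec psi_rev :: "(nat \<Rightarrow> 'a \<Rightarrow> nat) \<Rightarrow> (nat \<Rightarrow> 'a \<Rightarrow> nat) \<Rightarrow> (nat \<Rightarrow> 'a \<Rightarrow> nat \<Rightarrow> 'm::monoid_mult option)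
    \<Rightarrow> nat \<Rightarrow> 'a list \<Rightarrow> nat \<Rightarrow> 'm option" where
  "psi_rev \<delta>L \<delta>R \<psi> l [] r = Some 1"
| "psi_rev \<delta>L \<delta>R \<psi> l (\<sigma> # ts) r =
     (case psi_rev \<delta>L \<delta>R \<psi> l ts (\<delta>R r \<sigma>) of
        None \<Rightarrow> None
      | Some x \<Rightarrow> (case \<psi> (dfa_star \<delta>L l (rev ts)) \<sigma> r of
                     None \<Rightarrow> None
                   | Some y \<Rightarrow> Some (x * y)))"

definition psi_star :: "(nat \<Rightarrow> 'a \<Rightarrow> nat) \<Rightarrow> (nat \<Rightarrow> 'a \<Rightarrow> nat) \<Rightarrow> (nat \<Rightarrow> 'a \<Rightarrow> nat \<Rightarrow> 'm::monoid_mult option)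
    \<Rightarrow> nat \<Rightarrow> 'a list \<Rightarrow> nat \<Rightarrow> 'm option" where
  "psi_star \<delta>L \<delta>R \<psi> l t r = psi_rev \<delta>L \<delta>R \<psi> l (rev t) r"

lemma psi_star_Nil: "psi_star \<delta>L \<delta>R \<psi> l [] r = Some 1"
  by (simp add: psi_star_def)

lemma psi_star_snoc: "psi_star \<delta>L \<delta>R \<psi> l (t @ [\<sigma>]) r =
  (case psi_star \<delta>L \<delta>R \<psi> l t (\<delta>R r \<sigma>) of None \<Rightarrow> None
   | Some x \<Rightarrow> (case \<psi> (dfa_star \<delta>L l t) \<sigma> r of None \<Rightarrow> None | Some y \<Rightarrow> Some (x * y)))"
  proof -
  have "rev (t @ [\<sigma>]) = \<sigma> # rev t" by simp
  then show ?thesis unfolding psi_star_def by (simp only: psi_rev.simps rev_rev_ident)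
qed

definition bimachine_output :: "nat \<Rightarrow> (nat \<Rightarrow> 'a \<Rightarrow> nat) \<Rightarrow> nat \<Rightarrow> (nat \<Rightarrow> 'a \<Rightarrow> nat)
    \<Rightarrow> (nat \<Rightarrow> 'a \<Rightarrow> nat \<Rightarrow> 'm::monoid_mult option) \<Rightarrow> 'a list \<Rightarrow> 'm option" where
  "bimachine_output sL \<delta>L sR \<delta>R \<psi> t = psi_star \<delta>L \<delta>R \<psi> sL t sR"

end

theory Submission
  imports Defs
begin

text \<open>After reading a prefix u, the left automaton stores the set of states reachable from I
  by u; before reading the remaining suffix v, the right automaton stores the set of states from
  which F is reachable by v. For a state q in both sets,
  functionality and right cancellation make the output \<alpha>(u, q) of the runs from I to q reading u
  unique, and the tuple (\<alpha>(u, q))_q is equalized by the outputs of continuations of q reading v.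
  Two such tuples with the same pair of state sets share an equalizer and hence their most general
  equalizers, so an mge X can be chosen as a function of the two sets alone. Then
  E(u, v) = \<alpha>(u, q) X(q) does not depend on q, and on the letter \<sigma> the bimachine outputs the y
  with E(u, \<sigma> v) y = E(u \<sigma>, v), which exists because X is most general. Choosing X = 1 whenever
  the tuple is constant gives E([], v) = 1 and makes E(u, []) the output of the transducer on u.\<close>

subsection \<open>Most general equalizers of tuples\<close>

lemma mge_monoid_right_cancel:
  "mge_monoid TYPE('m::monoid_mult) \<Longrightarrow> a * c = b * (c::'m) \<Longrightarrow> a = b"
  unfolding mge_monoid_def right_cancellation_def by blast

lemma mge_monoid_left_cancel:
  assumes M: "mge_monoid TYPE('m::monoid_mult)" and eq: "(a::'m) * x = a * y"
  shows "x = y"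
proof -
  have "equalizable a a" unfolding equalizable_def is_equalizer_def by blast
  then obtain x1 x2 where mge: "is_mge a a x1 x2" using M unfolding mge_monoid_def by blast
  \<comment> \<open>\<langle>1, 1\<rangle> = \<langle>x1 s, x2 s\<rangle> is an instance of the mge; right cancellation makes s invertible.\<close>
  obtain s where s1: "1 = x1 * s" and s2: "1 = x2 * s"
    using mge unfolding is_mge_def is_equalizer_def by fastforce
  have "(s * x2) * s = 1 * s" using s2 by (metis mult.assoc mult_1_left mult_1_right)
  hence "s * x2 = 1" using mge_monoid_right_cancel[OF M] by blast
  hence "x1 = x2" by (metis s1 mult.assoc mult_1_left mult_1_right)
  moreover obtain t where "x = x1 * t" "y = x2 * t"
    using mge eq unfolding is_mge_def is_equalizer_def by blast
  ultimately show ?thesis by simp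
qed

definition equalizes :: "('i \<Rightarrow> 'm::monoid_mult) \<Rightarrow> 'i set \<Rightarrow> ('i \<Rightarrow> 'm) \<Rightarrow> bool" where
  "equalizes A C X \<longleftrightarrow> (\<forall>p\<in>C. \<forall>q\<in>C. A p * X p = A q * X q)"

definition is_mge_on :: "('i \<Rightarrow> 'm::monoid_mult) \<Rightarrow> 'i set \<Rightarrow> ('i \<Rightarrow> 'm) \<Rightarrow> bool" where
  "is_mge_on A C X \<longleftrightarrow> equalizes A C X \<and> (\<forall>Y. equalizes A C Y \<longrightarrow> (\<exists>s. \<forall>q\<in>C. Y q = X q * s))"

lemma equalizesD: "equalizes A C X \<Longrightarrow> p \<in> C \<Longrightarrow> q \<in> C \<Longrightarrow> A p * X p = A q * X q"
  unfolding equalizes_def by blast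

lemma equalizes_subset: "equalizes A C' X \<Longrightarrow> C \<subseteq> C' \<Longrightarrow> equalizes A C X"
  unfolding equalizes_def by blast

lemma is_mge_on_const:
  assumes M: "mge_monoid TYPE('m::monoid_mult)" and const: "\<forall>q\<in>C. A q = (k::'m)"
  shows "is_mge_on A C (\<lambda>_. 1)"
  unfolding is_mge_on_def
proof (intro conjI allI impI)
  show "equalizes A C (\<lambda>_. 1)" using const by (simp add: equalizes_def)
next
  fix Y assume Y: "equalizes A C Y"
  show "\<exists>s. \<forall>q\<in>C. Y q = 1 * s"
  proof (cases "C = {}")
    case False
    then obtain q0 where q0: "q0 \<in> C" by blast
    have "Y q = Y q0" if "q \<in> C" for q
    proof (rule mge_monoid_left_cancel[OF M])
      show "k * Y q = k * Y q0" using equalizesD[OF Y that q0] const that q0 by simp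
    qed
    then show ?thesis by (intro exI[of _ "Y q0"]) simp
  qed simp
qed

lemma is_mge_on_insert:
  assumes X: "is_mge_on A C X" and c0: "c0 \<in> C" and c: "c \<notin> C"
    and ab: "is_mge (A c0 * X c0) (A c) a b"
  shows "is_mge_on A (insert c C) (\<lambda>q. if q = c then b else X q * a)" (is "is_mge_on _ _ ?X")
  unfolding is_mge_on_def
proof (intro conjI allI impI)
  have XC: "equalizes A C X" and X_gen: "\<And>Y. equalizes A C Y \<Longrightarrow> \<exists>s. \<forall>q\<in>C. Y q = X q * s"
    using X unfolding is_mge_on_def by blast+
  have "A p * ?X p = A c0 * X c0 * a" if "p \<in> insert c C" for p
  proof (cases "p = c")
    case True
    then show ?thesis using ab by (simp add: is_mge_def is_equalizer_def)
  next
    case False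
    then have "A p * X p = A c0 * X c0" using equalizesD[OF XC _ c0] that by simp
    then show ?thesis using False by (simp add: mult.assoc[symmetric])
  qed
  then show "equalizes A (insert c C) ?X" unfolding equalizes_def by simp
  fix Z assume Z: "equalizes A (insert c C) Z"
  obtain t where t: "\<forall>q\<in>C. Z q = X q * t" using X_gen equalizes_subset[OF Z] by blast
  have "A c0 * X c0 * t = A c * Z c" using t c0 equalizesD[OF Z, of c0 c] by (simp add: mult.assoc)
  then obtain x where "t = a * x" "Z c = b * x"
    using ab unfolding is_mge_def is_equalizer_def by blast
  then show "\<exists>s. \<forall>q\<in>insert c C. Z q = ?X q * s"
    using t c by (intro exI[of _ x]) (auto simp: mult.assoc)
qed

lemma is_mge_on_exists:
  assumes M: "mge_monoid TYPE('m::monoid_mult)" and "finite C" and "equalizes A C (Y::'i \<Rightarrow> 'm)"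
  shows "\<exists>X. is_mge_on A C X"
  using assms(2,3)
proof (induction C arbitrary: Y rule: finite_induct)
  case empty
  show ?case unfolding is_mge_on_def equalizes_def by simp
next
  case (insert c C)
  show ?case
  proof (cases "C = {}")
    case True
    then show ?thesis using is_mge_on_const[OF M, of "insert c C" A "A c"] by auto
  next
    case False
    then obtain c0 where c0: "c0 \<in> C" by blast
    obtain X where X: "is_mge_on A C X"
      using insert.IH equalizes_subset[OF insert.prems] by blast
    then obtain s where s: "\<forall>q\<in>C. Y q = X q * s"
      using equalizes_subset[OF insert.prems] unfolding is_mge_on_def by blast
    have "A c0 * X c0 * s = A c * Y c"
      using s c0 equalizesD[OF insert.prems, of c0 c] by (simp add: mult.assoc)
    then have "equalizable (A c0 * X c0) (A c)" unfolding equalizable_def is_equalizer_def by blast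
    then obtain a b where "is_mge (A c0 * X c0) (A c) a b" using M unfolding mge_monoid_def by blast
    then show ?thesis using is_mge_on_insert[OF X c0 insert.hyps(2)] by blast
  qed
qed

lemma equalizes_transfer:
  assumes M: "mge_monoid TYPE('m::monoid_mult)" and X: "is_mge_on A C (X::'i \<Rightarrow> 'm)"
    and ZA: "equalizes A C Z" and ZB: "equalizes B C Z"
  shows "equalizes B C X"
  unfolding equalizes_def
proof (intro ballI)
  obtain s where s: "\<forall>q\<in>C. Z q = X q * s" using X ZA unfolding is_mge_on_def by blast
  fix p q assume p: "p \<in> C" and q: "q \<in> C"
  have "(B p * X p) * s = B p * Z p" using s p by (simp add: mult.assoc)
  also have "\<dots> = B q * Z q" using equalizesD[OF ZB p q] .
  also have "\<dots> = (B q * X q) * s" using s q by (simp add: mult.assoc)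
  finally show "B p * X p = B q * X q" using mge_monoid_right_cancel[OF M] by blast
qed

lemma is_mge_on_transfer:
  assumes M: "mge_monoid TYPE('m::monoid_mult)" and "finite C" and X: "is_mge_on A C (X::'i \<Rightarrow> 'm)"
    and ZA: "equalizes A C Z" and ZB: "equalizes B C Z"
  shows "is_mge_on B C X"
  unfolding is_mge_on_def
proof (intro conjI allI impI)
  show "equalizes B C X" using equalizes_transfer[OF M X ZA ZB] .
  fix Y assume Y: "equalizes B C Y"
  obtain W where W: "is_mge_on B C W" using is_mge_on_exists[OF M \<open>finite C\<close> ZB] by blast
  have "equalizes A C W" using equalizes_transfer[OF M W ZB ZA] .
  then obtain s1 where "\<forall>q\<in>C. W q = X q * s1" using X unfolding is_mge_on_def by blast
  moreover obtain s2 where "\<forall>q\<in>C. Y q = W q * s2" using W Y unfolding is_mge_on_def by blast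
  ultimately show "\<exists>s. \<forall>q\<in>C. Y q = X q * s" by (intro exI[of _ "s1 * s2"]) (simp add: mult.assoc)
qed

subsection \<open>Runs of a monoidal transducer\<close>

lemma gen_trans_append:
  assumes "(p, (u, m1), q) \<in> gen_trans \<Delta>" and "(q, (v, m2), r) \<in> gen_trans \<Delta>"
  shows "(p, (u @ v, m1 * m2), r) \<in> gen_trans \<Delta>"
  using assms(2,1)
proof (induction rule: gen_trans.induct)
  case (step q1 v w q2 a m q3)
  have "(p, ((u @ v) @ word_of a, (m1 * w) * m), q3) \<in> gen_trans \<Delta>"
    using step by (intro gen_trans.step) auto
  then show ?case by (simp add: mult.assoc)
qed simp

lemma gen_trans_split:
  assumes "(p, (u @ v, m), r) \<in> gen_trans \<Delta>"
  shows "\<exists>q m1 m2. m = m1 * m2 \<and> (p, (u, m1), q) \<in> gen_trans \<Delta> \<and> (q, (v, m2), r) \<in> gen_trans \<Delta>"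
proof -
  have "w = u @ v \<Longrightarrow> \<exists>q m1 m2. m = m1 * m2 \<and> (p, (u, m1), q) \<in> gen_trans \<Delta> \<and>
      (q, (v, m2), r) \<in> gen_trans \<Delta>" if "(p, (w, m), r) \<in> gen_trans \<Delta>" for w m r
    using that
  proof (induction arbitrary: u v rule: gen_trans.induct)
    case (refl q)
    then show ?case by (intro exI[of _ q] exI[of _ 1]) (auto intro: gen_trans.refl)
  next
    case (step q1 w' m' q2 a mm q3)
    show ?case
    proof (cases a)
      case None
      obtain q m1 m2 where "m' = m1 * m2" "(q1, (u, m1), q) \<in> gen_trans \<Delta>"
        and qv: "(q, (v, m2), q2) \<in> gen_trans \<Delta>"
        using step.IH[of u v] step.prems None by (auto simp: word_of_def)
      moreover have "(q, (v, m2 * mm), q3) \<in> gen_trans \<Delta>"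
        using gen_trans.step[OF qv step.hyps(2)] None by (simp add: word_of_def)
      ultimately show ?thesis
        by (intro exI[of _ q] exI[of _ m1] exI[of _ "m2 * mm"]) (simp add: mult.assoc)
    next
      case (Some s)
      show ?thesis
      proof (cases v rule: rev_cases)
        case Nil
        have "(q1, (u, m' * mm), q3) \<in> gen_trans \<Delta>"
          using gen_trans.step[OF step.hyps] step.prems Nil by simp
        then show ?thesis using Nil by (metis gen_trans.refl mult_1_right)
      next
        case (snoc v' x)
        then have "w' = u @ v'" and "x = s" using step.prems Some by (auto simp: word_of_def)
        then obtain q m1 m2 where "m' = m1 * m2" "(q1, (u, m1), q) \<in> gen_trans \<Delta>"
          and qv: "(q, (v', m2), q2) \<in> gen_trans \<Delta>"
          using step.IH by blast
        moreover have "(q, (v, m2 * mm), q3) \<in> gen_trans \<Delta>"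
          using gen_trans.step[OF qv step.hyps(2)] Some snoc \<open>x = s\<close> by (simp add: word_of_def)
        ultimately show ?thesis
          by (intro exI[of _ q] exI[of _ m1] exI[of _ "m2 * mm"]) (simp add: mult.assoc)
      qed
    qed
  qed
  then show ?thesis using assms by blast
qed

lemma gen_trans_mem_iff:
  assumes "transducer Q I F \<Delta>" and "(p, (u, m), q) \<in> gen_trans \<Delta>"
  shows "p \<in> Q \<longleftrightarrow> q \<in> Q"
  using assms(2)
proof (induction rule: gen_trans.induct)
  case (step q1 u w q2 a m q3)
  then show ?case using assms(1) unfolding transducer_def by blast
qed simp

subsection \<open>Left and right state sets of a functional transducer\<close>

locale functional_transducer =
  fixes Q I F :: "'q set" and \<Delta> :: "('q \<times> ('a option \<times> 'm::monoid_mult) \<times> 'q) set"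
  assumes mge_M: "mge_monoid TYPE('m)" and transducer_T: "transducer Q I F \<Delta>"
    and functional_T: "functional I F \<Delta>" and empty_in_lang: "([], 1) \<in> trans_lang I F \<Delta>"
begin

abbreviation path :: "'q \<Rightarrow> 'a list \<Rightarrow> 'm \<Rightarrow> 'q \<Rightarrow> bool" where
  "path p u m q \<equiv> (p, (u, m), q) \<in> gen_trans \<Delta>"

lemma in_trans_lang_iff: "(u, m) \<in> trans_lang I F \<Delta> \<longleftrightarrow> (\<exists>p\<in>I. \<exists>f\<in>F. path p u m f)"
  by (simp add: trans_lang_def)

lemma trans_lang_functional:
  "(u, m) \<in> trans_lang I F \<Delta> \<Longrightarrow> (u, m') \<in> trans_lang I F \<Delta> \<Longrightarrow> m = m'"
  using functional_T unfolding functional_def by blast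

lemma finite_Q: "finite Q" and I_subset_Q: "I \<subseteq> Q" and F_subset_Q: "F \<subseteq> Q"
  using transducer_T unfolding transducer_def by auto

definition reach :: "'a list \<Rightarrow> 'q set" where
  "reach u = {q. \<exists>p\<in>I. \<exists>m. path p u m q}"

definition coreach :: "'a list \<Rightarrow> 'q set" where
  "coreach v = {q. \<exists>f\<in>F. \<exists>m. path q v m f}"

text \<open>On the empty word the state sets are I and F rather than their \<epsilon>-closures reach [] and
  coreach []: this makes all prefix outputs of [] equal to 1, and all prefix outputs of u into
  final states equal to the output of the transducer on u.\<close>

definition left_state :: "'a list \<Rightarrow> 'q set" where
  "left_state u = (if u = [] then I else reach u)"

definition right_state :: "'a list \<Rightarrow> 'q set" where
  "right_state v = (if v = [] then F else coreach v)"

definition fwd :: "'q set \<Rightarrow> 'a \<Rightarrow> 'q set" where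
  "fwd S \<sigma> = {q'. \<exists>q\<in>S. \<exists>m. path q [\<sigma>] m q'}"

definition bwd :: "'q set \<Rightarrow> 'a \<Rightarrow> 'q set" where
  "bwd S \<sigma> = {q. \<exists>q'\<in>S. \<exists>m. path q [\<sigma>] m q'}"

definition live :: "'a list \<Rightarrow> 'a list \<Rightarrow> 'q set" where
  "live u v = left_state u \<inter> right_state v"

lemma left_state_subset_reach: "left_state u \<subseteq> reach u"
  by (auto simp: left_state_def reach_def intro: gen_trans.refl)

lemma right_state_subset_coreach: "right_state v \<subseteq> coreach v"
  by (auto simp: right_state_def coreach_def intro: gen_trans.refl)

lemma left_state_subset_Q: "left_state u \<subseteq> Q"
  using left_state_subset_reach gen_trans_mem_iff[OF transducer_T] I_subset_Q
  by (fastforce simp: reach_def)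

lemma right_state_subset_Q: "right_state v \<subseteq> Q"
  using right_state_subset_coreach gen_trans_mem_iff[OF transducer_T] F_subset_Q
  by (fastforce simp: coreach_def)

lemma fwd_subset_Q: "S \<subseteq> Q \<Longrightarrow> fwd S \<sigma> \<subseteq> Q"
  using gen_trans_mem_iff[OF transducer_T] by (fastforce simp: fwd_def)

lemma bwd_subset_Q: "S \<subseteq> Q \<Longrightarrow> bwd S \<sigma> \<subseteq> Q"
  using gen_trans_mem_iff[OF transducer_T] by (fastforce simp: bwd_def)

lemma finite_live: "finite (live u v)"
  using left_state_subset_Q finite_Q unfolding live_def by (meson finite_Int finite_subset)

lemma left_state_snoc: "left_state (u @ [\<sigma>]) = fwd (left_state u) \<sigma>"
proof (intro equalityI subsetI)
  fix q' assume "q' \<in> left_state (u @ [\<sigma>])"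
  then obtain p m where p: "p \<in> I" "path p (u @ [\<sigma>]) m q'" by (auto simp: left_state_def reach_def)
  show "q' \<in> fwd (left_state u) \<sigma>"
  proof (cases "u = []")
    case True
    then show ?thesis using p unfolding fwd_def left_state_def by auto
  next
    case False
    obtain q m1 m2 where "path p u m1 q" "path q [\<sigma>] m2 q'" using gen_trans_split[OF p(2)] by blast
    then show ?thesis using p(1) False unfolding fwd_def left_state_def reach_def by auto
  qed
next
  fix q' assume "q' \<in> fwd (left_state u) \<sigma>"
  then obtain q p m m0 where "path q [\<sigma>] m q'" "p \<in> I" "path p u m0 q"
    using left_state_subset_reach by (fastforce simp: fwd_def reach_def)
  then show "q' \<in> left_state (u @ [\<sigma>])"
    using gen_trans_append by (fastforce simp: left_state_def reach_def)
qed

lemma right_state_Cons: "right_state (\<sigma> # v) = bwd (right_state v) \<sigma>"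
proof (intro equalityI subsetI)
  fix q assume "q \<in> right_state (\<sigma> # v)"
  then obtain f m where f: "f \<in> F" "path q ([\<sigma>] @ v) m f" by (auto simp: right_state_def coreach_def)
  then obtain q' m1 m2 where "path q [\<sigma>] m1 q'" "path q' v m2 f" using gen_trans_split[OF f(2)] by blast
  then show "q \<in> bwd (right_state v) \<sigma>" using f by (auto simp: bwd_def right_state_def coreach_def)
next
  fix q assume "q \<in> bwd (right_state v) \<sigma>"
  then obtain q' f m m0 where qq': "path q [\<sigma>] m q'" and f: "f \<in> F" and q'f: "path q' v m0 f"
    using right_state_subset_coreach by (fastforce simp: bwd_def coreach_def)
  have "path q ([\<sigma>] @ v) (m * m0) f" using gen_trans_append[OF qq' q'f] .
  then show "q \<in> right_state (\<sigma> # v)" using f unfolding right_state_def coreach_def by auto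
qed

lemma live_nonempty_iff:
  assumes "u @ v \<noteq> []"
  shows "live u v \<noteq> {} \<longleftrightarrow> (\<exists>m. (u @ v, m) \<in> trans_lang I F \<Delta>)"
proof
  assume "live u v \<noteq> {}"
  then obtain q p m f z where "p \<in> I" "f \<in> F" and pq: "path p u m q" and qf: "path q v z f"
    using left_state_subset_reach right_state_subset_coreach
    by (fastforce simp: live_def reach_def coreach_def)
  then show "\<exists>m. (u @ v, m) \<in> trans_lang I F \<Delta>"
    using gen_trans_append[OF pq qf] unfolding in_trans_lang_iff by blast
next
  assume "\<exists>m. (u @ v, m) \<in> trans_lang I F \<Delta>"
  then obtain p f m where pf: "p \<in> I" "f \<in> F" "path p (u @ v) m f" by (auto simp: in_trans_lang_iff)
  obtain q m1 m2 where pq: "path p u m1 q" and qf: "path q v m2 f"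
    using gen_trans_split[OF pf(3)] by blast
  consider "u = []" | "u \<noteq> []" "v = []" | "u \<noteq> []" "v \<noteq> []" by blast
  then show "live u v \<noteq> {}"
  proof cases
    case 1
    then have "p \<in> coreach v" using pf unfolding coreach_def by auto
    then have "p \<in> live u v" using 1 pf(1) assms by (simp add: live_def left_state_def right_state_def)
    then show ?thesis by blast
  next
    case 2
    then have "f \<in> reach u" using pf unfolding reach_def by auto
    then have "f \<in> live u v" using 2 pf(2) by (simp add: live_def left_state_def right_state_def)
    then show ?thesis by blast
  next
    case 3
    then have "q \<in> live u v" using pf pq qf
      unfolding live_def left_state_def right_state_def reach_def coreach_def by auto
    then show ?thesis by blast
  qed
qed

lemma live_step:
  assumes "p \<in> live u (\<sigma> # v)"
  shows "\<exists>q' m. path p [\<sigma>] m q' \<and> q' \<in> live (u @ [\<sigma>]) v"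
  using assms unfolding live_def right_state_Cons left_state_snoc fwd_def bwd_def by blast

subsection \<open>Outputs of split words\<close>

definition prefix_output :: "'a list \<Rightarrow> 'q \<Rightarrow> 'm" where
  "prefix_output u q = (THE m. \<exists>p\<in>I. path p u m q)"

definition suffix_output :: "'a list \<Rightarrow> 'q \<Rightarrow> 'm" where
  "suffix_output v q = (SOME z. \<exists>f\<in>F. path q v z f)"

lemma prefix_output_eq:
  assumes p: "p \<in> I" "path p u m q" and q: "q \<in> coreach v"
  shows "prefix_output u q = m"
  unfolding prefix_output_def
proof (rule the_equality)
  show "\<exists>p\<in>I. path p u m q" using p by blast
  obtain f z where f: "f \<in> F" "path q v z f" using q by (auto simp: coreach_def)
  fix m' assume "\<exists>p\<in>I. path p u m' q"
  then have "(u @ v, m' * z) \<in> trans_lang I F \<Delta>" and "(u @ v, m * z) \<in> trans_lang I F \<Delta>"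
    using gen_trans_append[OF _ f(2)] p f(1) unfolding in_trans_lang_iff by blast+
  then show "m' = m" using trans_lang_functional mge_monoid_right_cancel[OF mge_M] by blast
qed

lemma prefix_output_path:
  "q \<in> reach u \<Longrightarrow> q \<in> coreach v \<Longrightarrow> \<exists>p\<in>I. path p u (prefix_output u q) q"
  using prefix_output_eq by (auto simp: reach_def)

lemma prefix_output_snoc:
  assumes p: "p \<in> live u (\<sigma> # v)" and pq: "path p [\<sigma>] m q'" and q': "q' \<in> right_state v"
  shows "prefix_output (u @ [\<sigma>]) q' = prefix_output u p * m"
proof -
  obtain p0 where "p0 \<in> I" "path p0 u (prefix_output u p) p"
    using p prefix_output_path left_state_subset_reach right_state_subset_coreach
    unfolding live_def by blast
  then show ?thesis
    using prefix_output_eq gen_trans_append[OF _ pq] q' right_state_subset_coreach by blast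
qed

lemma suffix_output_equalizes:
  assumes "C \<subseteq> reach u" "C \<subseteq> coreach v"
  shows "equalizes (prefix_output u) C (suffix_output v)"
proof -
  have "(u @ v, prefix_output u q * suffix_output v q) \<in> trans_lang I F \<Delta>" if q: "q \<in> C" for q
  proof -
    obtain p where p: "p \<in> I" "path p u (prefix_output u q) q"
      using prefix_output_path assms q by blast
    have "\<exists>z. \<exists>f\<in>F. path q v z f" using assms q unfolding coreach_def by blast
    then have "\<exists>f\<in>F. path q v (suffix_output v q) f" unfolding suffix_output_def by (rule someI_ex)
    then obtain f where "f \<in> F" and qf: "path q v (suffix_output v q) f" by blast
    then show ?thesis using gen_trans_append[OF p(2) qf] p(1) unfolding in_trans_lang_iff by blast
  qed
  then show ?thesis unfolding equalizes_def using trans_lang_functional by blast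
qed

definition mge_for :: "'q set \<Rightarrow> 'q set \<Rightarrow> ('q \<Rightarrow> 'm) \<Rightarrow> bool" where
  "mge_for L R X \<longleftrightarrow>
     (\<forall>u v. left_state u = L \<longrightarrow> right_state v = R \<longrightarrow> is_mge_on (prefix_output u) (L \<inter> R) X)"

text \<open>Preferring \<lambda>_. 1 normalizes the split outputs at both ends of the word.\<close>

definition mge_of :: "'q set \<Rightarrow> 'q set \<Rightarrow> 'q \<Rightarrow> 'm" where
  "mge_of L R = (if mge_for L R (\<lambda>_. 1) then (\<lambda>_. 1) else (SOME X. mge_for L R X))"

text \<open>The suffix outputs of v0 equalize the prefix outputs of every u with the same left set
  as u0, so the mge transfers from u0 to u.\<close>

lemma mge_for_if_is_mge_on:
  assumes "is_mge_on (prefix_output u0) (live u0 v0) X"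
  shows "mge_for (left_state u0) (right_state v0) X"
  unfolding mge_for_def
proof (intro allI impI)
  fix u v assume u: "left_state u = left_state u0" and v: "right_state v = right_state v0"
  have "live u0 v0 \<subseteq> reach u" "live u0 v0 \<subseteq> reach u0" "live u0 v0 \<subseteq> coreach v0"
    using left_state_subset_reach right_state_subset_coreach u unfolding live_def by blast+
  then show "is_mge_on (prefix_output u) (left_state u0 \<inter> right_state v0) X"
    using is_mge_on_transfer[OF mge_M finite_live assms] suffix_output_equalizes
    unfolding live_def by blast
qed

lemma mge_for_mge_of: "mge_for L R X \<Longrightarrow> mge_for L R (mge_of L R)"
  using someI[of "mge_for L R"] by (simp add: mge_of_def)

lemma is_mge_on_mge_of: "is_mge_on (prefix_output u) (live u v) (mge_of (left_state u) (right_state v))"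
proof -
  have "live u v \<subseteq> reach u" "live u v \<subseteq> coreach v"
    using left_state_subset_reach right_state_subset_coreach unfolding live_def by blast+
  then obtain X where "is_mge_on (prefix_output u) (live u v) X"
    using is_mge_on_exists[OF mge_M finite_live] suffix_output_equalizes by blast
  then have "mge_for (left_state u) (right_state v) (mge_of (left_state u) (right_state v))"
    using mge_for_if_is_mge_on mge_for_mge_of by blast
  then show ?thesis unfolding mge_for_def live_def by blast
qed

lemma mge_of_const:
  assumes "\<forall>q\<in>live u v. prefix_output u q = k"
  shows "mge_of (left_state u) (right_state v) = (\<lambda>_. 1)"
  using mge_for_if_is_mge_on[OF is_mge_on_const[OF mge_M assms]] by (simp add: mge_of_def)

definition split_output :: "'a list \<Rightarrow> 'a list \<Rightarrow> 'm" where
  "split_output u v = (let q = SOME q. q \<in> live u v in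
     prefix_output u q * mge_of (left_state u) (right_state v) q)"

lemma split_output_eq:
  assumes "q \<in> live u v"
  shows "prefix_output u q * mge_of (left_state u) (right_state v) q = split_output u v"
  unfolding split_output_def Let_def
  using equalizesD[OF is_mge_on_mge_of[unfolded is_mge_on_def, THEN conjunct1] assms
      someI[of "\<lambda>q. q \<in> live u v", OF assms]] .

lemma split_output_const:
  assumes "q \<in> live u v" and "\<forall>q\<in>live u v. prefix_output u q = k"
  shows "split_output u v = k"
  using split_output_eq[OF assms(1)] mge_of_const[OF assms(2)] assms by simp

lemma split_output_Nil_left:
  assumes "live [] v \<noteq> {}"
  shows "split_output [] v = 1"
proof -
  have "prefix_output [] q = 1" if "q \<in> live [] v" for q
    using prefix_output_eq[OF _ gen_trans.refl] that right_state_subset_coreach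
    by (auto simp: live_def left_state_def)
  then show ?thesis using split_output_const assms by blast
qed

lemma split_output_Nil_right:
  assumes "(u, m) \<in> trans_lang I F \<Delta>" and "q \<in> live u []"
  shows "split_output u [] = m"
proof -
  have "prefix_output u q = m" if "q \<in> live u []" for q
  proof -
    have "q \<in> reach u" "q \<in> coreach []"
      using that left_state_subset_reach right_state_subset_coreach unfolding live_def by blast+
    moreover have "q \<in> F" using that by (simp add: live_def right_state_def)
    ultimately have "(u, prefix_output u q) \<in> trans_lang I F \<Delta>"
      using prefix_output_path unfolding in_trans_lang_iff by blast
    then show ?thesis using trans_lang_functional assms(1) by blast
  qed
  then show ?thesis using split_output_const assms(2) by blast
qed

subsection \<open>The bimachine\<close>

definition psi_set :: "'q set \<Rightarrow> 'a \<Rightarrow> 'q set \<Rightarrow> 'm option" where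
  "psi_set L \<sigma> R = (if L \<inter> bwd R \<sigma> = {} then None else
     Some (SOME y. \<exists>p\<in>L \<inter> bwd R \<sigma>. \<exists>q'\<in>fwd L \<sigma> \<inter> R. \<exists>m. path p [\<sigma>] m q' \<and>
                      m * mge_of (fwd L \<sigma>) R q' = mge_of L (bwd R \<sigma>) p * y))"

lemma psi_set_left_right:
  "psi_set (left_state t) \<sigma> (right_state v) = (if live t (\<sigma> # v) = {} then None else
     Some (SOME y. \<exists>p\<in>live t (\<sigma> # v). \<exists>q'\<in>live (t @ [\<sigma>]) v. \<exists>m. path p [\<sigma>] m q' \<and>
       m * mge_of (left_state (t @ [\<sigma>])) (right_state v) q' =
       mge_of (left_state t) (right_state (\<sigma> # v)) p * y))"
  by (simp add: psi_set_def live_def left_state_snoc right_state_Cons)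

lemma split_output_transition:
  assumes p: "p \<in> live t (\<sigma> # v)" and q': "q' \<in> live (t @ [\<sigma>]) v" and pq: "path p [\<sigma>] m q'"
    and y: "m * mge_of (left_state (t @ [\<sigma>])) (right_state v) q' =
            mge_of (left_state t) (right_state (\<sigma> # v)) p * y"
  shows "split_output t (\<sigma> # v) * y = split_output (t @ [\<sigma>]) v"
proof -
  have "split_output t (\<sigma> # v) * y =
      prefix_output t p * (mge_of (left_state t) (right_state (\<sigma> # v)) p * y)"
    using split_output_eq[OF p, symmetric] by (simp add: mult.assoc)
  also have "\<dots> = prefix_output (t @ [\<sigma>]) q' * mge_of (left_state (t @ [\<sigma>])) (right_state v) q'"
    using prefix_output_snoc[OF p pq] q' y by (simp add: live_def mult.assoc)
  also have "\<dots> = split_output (t @ [\<sigma>]) v" using split_output_eq[OF q'] .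
  finally show ?thesis .
qed

text \<open>Following one transition from each live state before \<sigma> yields an equalizer of the
  prefix outputs of t; the mge property then supplies the factor y.\<close>

lemma transition_factor_exists:
  assumes "live t (\<sigma> # v) \<noteq> {}"
  shows "\<exists>y. \<exists>p\<in>live t (\<sigma> # v). \<exists>q'\<in>live (t @ [\<sigma>]) v. \<exists>m. path p [\<sigma>] m q' \<and>
     m * mge_of (left_state (t @ [\<sigma>])) (right_state v) q' =
     mge_of (left_state t) (right_state (\<sigma> # v)) p * y"
proof -
  let ?C = "live t (\<sigma> # v)" and ?X = "mge_of (left_state t) (right_state (\<sigma> # v))"
    and ?X' = "mge_of (left_state (t @ [\<sigma>])) (right_state v)"
  have "\<forall>p\<in>?C. \<exists>q'. \<exists>m. path p [\<sigma>] m q' \<and> q' \<in> live (t @ [\<sigma>]) v"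
    using live_step by blast
  from bchoice[OF this] obtain nxt
    where "\<forall>p\<in>?C. \<exists>m. path p [\<sigma>] m (nxt p) \<and> nxt p \<in> live (t @ [\<sigma>]) v" by blast
  from bchoice[OF this] obtain out
    where nxt: "\<And>p. p \<in> ?C \<Longrightarrow> path p [\<sigma>] (out p) (nxt p) \<and> nxt p \<in> live (t @ [\<sigma>]) v" by blast
  define Z where "Z p = out p * ?X' (nxt p)" for p
  have "prefix_output t p * Z p = split_output (t @ [\<sigma>]) v" if "p \<in> ?C" for p
  proof -
    have pn: "path p [\<sigma>] (out p) (nxt p)" and live_nxt: "nxt p \<in> live (t @ [\<sigma>]) v"
      using nxt[OF that] by auto
    have "prefix_output (t @ [\<sigma>]) (nxt p) = prefix_output t p * out p"
      using prefix_output_snoc[OF that pn] live_nxt by (simp add: live_def)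
    then show ?thesis using split_output_eq[OF live_nxt] by (simp add: Z_def mult.assoc)
  qed
  then have "equalizes (prefix_output t) ?C Z" unfolding equalizes_def by simp
  then obtain s where "\<forall>p\<in>?C. Z p = ?X p * s" using is_mge_on_mge_of unfolding is_mge_on_def by blast
  moreover obtain p0 where "p0 \<in> ?C" using assms by blast
  ultimately show ?thesis using nxt unfolding Z_def by blast
qed

lemma psi_set_step:
  assumes "live t (\<sigma> # v) \<noteq> {}"
  shows "\<exists>y. psi_set (left_state t) \<sigma> (right_state v) = Some y \<and>
    split_output t (\<sigma> # v) * y = split_output (t @ [\<sigma>]) v"
proof -
  let ?P = "\<lambda>y. \<exists>p\<in>live t (\<sigma> # v). \<exists>q'\<in>live (t @ [\<sigma>]) v. \<exists>m. path p [\<sigma>] m q' \<and>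
     m * mge_of (left_state (t @ [\<sigma>])) (right_state v) q' =
     mge_of (left_state t) (right_state (\<sigma> # v)) p * y"
  have "?P (SOME y. ?P y)" using transition_factor_exists[OF assms] by (rule someI_ex)
  then have "split_output t (\<sigma> # v) * (SOME y. ?P y) = split_output (t @ [\<sigma>]) v"
    using split_output_transition by blast
  then show ?thesis using assms unfolding psi_set_left_right by simp
qed

definition state_of :: "nat \<Rightarrow> 'q set" where
  "state_of = (SOME h. bij_betw h {0..<card (Pow Q)} (Pow Q))"

definition state_code :: "'q set \<Rightarrow> nat" where
  "state_code = inv_into {0..<card (Pow Q)} state_of"

lemma bij_betw_state_of: "bij_betw state_of {0..<card (Pow Q)} (Pow Q)"
  unfolding state_of_def using ex_bij_betw_nat_finite finite_Q by (metis finite_Pow_iff someI_ex)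

lemma state_of_code: "S \<subseteq> Q \<Longrightarrow> state_of (state_code S) = S"
  unfolding state_code_def using bij_betw_inv_into_right[OF bij_betw_state_of] by blast

lemma state_code_in: "S \<subseteq> Q \<Longrightarrow> state_code S \<in> {0..<card (Pow Q)}"
  unfolding state_code_def using bij_betw_apply[OF bij_betw_inv_into[OF bij_betw_state_of]] by blast

lemma state_of_subset_Q: "n \<in> {0..<card (Pow Q)} \<Longrightarrow> state_of n \<subseteq> Q"
  using bij_betw_apply[OF bij_betw_state_of] by blast

definition delta_L :: "nat \<Rightarrow> 'a \<Rightarrow> nat" where
  "delta_L n \<sigma> = state_code (fwd (state_of n) \<sigma>)"

definition delta_R :: "nat \<Rightarrow> 'a \<Rightarrow> nat" where
  "delta_R n \<sigma> = state_code (bwd (state_of n) \<sigma>)"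

definition psi :: "nat \<Rightarrow> 'a \<Rightarrow> nat \<Rightarrow> 'm option" where
  "psi l \<sigma> r = psi_set (state_of l) \<sigma> (state_of r)"

lemma dfa_delta_L: "dfa {0..<card (Pow Q)} (state_code I) delta_L"
  unfolding dfa_def delta_L_def
  using state_code_in I_subset_Q fwd_subset_Q state_of_subset_Q by simp

lemma dfa_delta_R: "dfa {0..<card (Pow Q)} (state_code F) delta_R"
  unfolding dfa_def delta_R_def
  using state_code_in F_subset_Q bwd_subset_Q state_of_subset_Q by simp

lemma dfa_star_delta_L: "dfa_star delta_L (state_code I) t = state_code (left_state t)"
proof (induction t rule: rev_induct)
  case Nil
  then show ?case by (simp add: dfa_star_def left_state_def)
next
  case (snoc \<sigma> t)
  then show ?case
    using state_of_code[OF left_state_subset_Q]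
    by (simp add: dfa_star_def delta_L_def left_state_snoc)
qed

lemma delta_R_right_state: "delta_R (state_code (right_state v)) \<sigma> = state_code (right_state (\<sigma> # v))"
  using state_of_code[OF right_state_subset_Q] by (simp add: delta_R_def right_state_Cons)

lemma psi_star_right_state:
  "psi_star delta_L delta_R psi (state_code I) t (state_code (right_state v)) =
     (if t = [] then Some 1 else if live t v = {} then None else Some (split_output t v))"
proof (induction t arbitrary: v rule: rev_induct)
  case Nil
  then show ?case by (simp add: psi_star_Nil)
next
  case (snoc \<sigma> t)
  have psi_eq: "psi (dfa_star delta_L (state_code I) t) \<sigma> (state_code (right_state v)) =
      psi_set (left_state t) \<sigma> (right_state v)"
    using state_of_code left_state_subset_Q right_state_subset_Q
    by (simp add: psi_def dfa_star_delta_L)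
  have live_iff: "live (t @ [\<sigma>]) v = {} \<longleftrightarrow> live t (\<sigma> # v) = {}"
    using live_nonempty_iff[of "t @ [\<sigma>]" v] live_nonempty_iff[of t "\<sigma> # v"] by auto
  show ?case
  proof (cases "live t (\<sigma> # v) = {}")
    case True
    then show ?thesis using live_iff
      by (simp add: psi_star_snoc psi_eq psi_set_left_right split: option.split)
  next
    case False
    then obtain y where y: "psi_set (left_state t) \<sigma> (right_state v) = Some y"
        "split_output t (\<sigma> # v) * y = split_output (t @ [\<sigma>]) v"
      using psi_set_step by blast
    have "psi_star delta_L delta_R psi (state_code I) t (delta_R (state_code (right_state v)) \<sigma>) =
        Some (split_output t (\<sigma> # v))"
      using snoc.IH[of "\<sigma> # v"] False split_output_Nil_left
      by (cases "t = []") (simp_all add: delta_R_right_state)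
    then show ?thesis using False live_iff y by (simp add: psi_star_snoc psi_eq)
  qed
qed

lemma bimachine_output_eq_trans_output:
  "bimachine_output (state_code I) delta_L (state_code F) delta_R psi t = trans_output I F \<Delta> t"
proof -
  have "bimachine_output (state_code I) delta_L (state_code F) delta_R psi t =
      (if t = [] then Some 1 else if live t [] = {} then None else Some (split_output t []))"
    using psi_star_right_state[of t "[]"] by (simp add: bimachine_output_def right_state_def)
  moreover have "(THE m. (t, m) \<in> trans_lang I F \<Delta>) = m" if "(t, m) \<in> trans_lang I F \<Delta>" for m
    using that trans_lang_functional by blast
  ultimately show ?thesis
    using empty_in_lang live_nonempty_iff[of t "[]"] split_output_Nil_right
    unfolding trans_output_def by (auto simp del: ex_in_conv)
qed

end

theorem theorem2:
  fixes Q I F :: "'q set"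
    and \<Delta> :: "('q \<times> ('a::finite option \<times> 'm::monoid_mult) \<times> 'q) set"
  assumes "mge_monoid TYPE('m)"
    and "transducer Q I F \<Delta>"
    and "functional I F \<Delta>"
    and "([], 1) \<in> trans_lang I F \<Delta>"
  shows "\<exists>(Ls :: nat set) sL \<delta>L (Rs :: nat set) sR \<delta>R (\<psi> :: nat \<Rightarrow> 'a \<Rightarrow> nat \<Rightarrow> 'm option).
           dfa Ls sL \<delta>L \<and> dfa Rs sR \<delta>R \<and>
           card Ls \<le> 2 ^ card Q \<and> card Rs \<le> 2 ^ card Q \<and>
           (\<forall>t. bimachine_output sL \<delta>L sR \<delta>R \<psi> t = trans_output I F \<Delta> t)"
proof -
  interpret functional_transducer Q I F \<Delta> by unfold_locales (rule assms)+
  have "card {0..<card (Pow Q)} = 2 ^ card Q" using finite_Q by (simp add: card_Pow)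
  then show ?thesis
    using dfa_delta_L dfa_delta_R bimachine_output_eq_trans_output by fastforce
qed

end
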